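(* Assume the setting below, let $\lambda>0$ with $\mu_+(\max\{\lambda,1\})\le1$, assume (A1), (A2), (A4), (A5), (A6), (A7), and (A8) with $\beta=0$. If $r$ is a cavitating equilibrium solution with $r(1)=\lambda$, then $$\lim_{\rho\to0^+}r'(\rho)\tau(\rho)^{n-1}=\varpi,$$ where $\varpi>0$ is the (unique) point with $h'(\varpi)=0$.
   Context: Setting: $n\ge2$; $\kappa$ continuous on $[0,\infty)$, $\mu_+(\lambda)=\int_0^\lambda s\max\{\kappa(s),0\}ds$; $f$ solves $f''+\kappa f=0$, $f(0)=0$, $f'(0)=1$. $\Phi(v_1,\dots,v_n)=\sum_i\phi(v_i)+h(v_1\cdots v_n)$, $\tau(\rho)=f(r(\rho))/f(\rho)$, $T(\rho)=\tau^{n-1}\big[\phi'(r')+h'(r'\tau^{n-1})\tau^{n-1}\big]$ (radial Cauchy stress). An equilibrium solution with $r(1)=\lambda$ is $r\in C^1(0,1]$, twice differentiable on $(0,1)$, $r'>0$ on $(0,1]$, $r(0):=\lim_{\rho\to0^+}r(\rho)\ge0$, $r(1)=\lambda$, satisfying on $(0,1)$ $$f(\rho)\big[\phi''(r')+h''(r'\tau^{n-1})\tau^{2(n-1)}\big]r''=(n-1)\big[f'(r)\phi'(\tau)-f'(\rho)\phi'(r')\big]-(n-1)\big(f'(r)r'-f'(\rho)\tau\big)h''(r'\tau^{n-1})\,r'\tau^{2n-3};$$ it is cavitating if $r(0)>0$ and $\lim_{\rho\to0^+}T(\rho)=0$. (A1) $h$ is $C^2$, strictly convex. (A2) $\lim_{v\to0^+}h(v)=\lim_{v\to\infty}h(v)/v=+\infty$.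 (A4) $\phi:(0,\infty)\to(0,\infty)$ $C^2$, convex. (A5) $v\phi'(v)$ increasing. (A6) there is $t_0\ge0$ with $\phi'(t_0)=0$; $q_1(s)=\sup_{v>t_0}\phi'(v)/\phi'(sv)$ ($s\ge1$), $q_0(s)=\inf_{v>t_0/s}\phi'(v)/\phi'(sv)$ ($s\in(0,1]$) satisfy $q_1\in C^1[1,\infty)$, $q_0\in C^1(0,1]$, $q_1(s)\to0$ ($s\to\infty$), $q_0(s)\to\infty$ ($s\to0^+$), $q_1'<0$, $q_0'<0$. (A7) there are $\delta_0,\delta_1>0$ with $|\phi'(sv)|\le\delta_1\phi(v)/v$ for all $v>0$ whenever $|s-1|<\delta_0$. (A8) $\phi(v)\le\delta_2(1+v^\alpha+v^{-\beta})$ for all $v>0$, $\delta_2>0$, $0<\alpha<n$, $0\le\beta<1+1/(n-1)$. *)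

theory Defs
  imports "HOL-Analysis.Analysis"
begin

definition mu_plus :: "(real \<Rightarrow> real) \<Rightarrow> real \<Rightarrow> real" where
  "mu_plus \<kappa> L = integral {0..L} (\<lambda>s. s * max (\<kappa> s) 0)"

definition strictly_convex_on :: "real set \<Rightarrow> (real \<Rightarrow> real) \<Rightarrow> bool" where
  "strictly_convex_on S g \<longleftrightarrow>
     (\<forall>x\<in>S. \<forall>y\<in>S. \<forall>u. x \<noteq> y \<and> 0 < u \<and> u < 1 \<longrightarrow>
        g (u * x + (1 - u) * y) < u * g x + (1 - u) * g y)"

definition C2_on :: "real set \<Rightarrow> (real \<Rightarrow> real) \<Rightarrow> bool" where
  "C2_on S g \<longleftrightarrow> (\<forall>x\<in>S. g differentiable (at x)) \<and>
     (\<forall>x\<in>S. deriv g differentiable (at x)) \<and> continuous_on S (deriv (deriv g))"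

definition tau :: "(real \<Rightarrow> real) \<Rightarrow> (real \<Rightarrow> real) \<Rightarrow> real \<Rightarrow> real" where
  "tau f r \<rho> = f (r \<rho>) / f \<rho>"

text \<open>Radial Cauchy stress T(rho); rd is r'.\<close>
definition cauchy_T :: "nat \<Rightarrow> (real \<Rightarrow> real) \<Rightarrow> (real \<Rightarrow> real) \<Rightarrow> (real \<Rightarrow> real)
    \<Rightarrow> (real \<Rightarrow> real) \<Rightarrow> (real \<Rightarrow> real) \<Rightarrow> real \<Rightarrow> real" where
  "cauchy_T n \<phi> h f r rd \<rho> =
     tau f r \<rho> ^ (n - 1) * (deriv \<phi> (rd \<rho>)
       + deriv h (rd \<rho> * tau f r \<rho> ^ (n - 1)) * tau f r \<rho> ^ (n - 1))"

end

theory Submission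
  imports Defs
begin

text \<open>Since \<open>\<mu>\<^sub>+ \<le> 1\<close> on \<open>[0, max \<lambda> 1]\<close>, a Sturm comparison keeps \<open>f\<close> positive there,
  so \<open>\<tau> = f(r)/f(\<rho>) \<rightarrow> \<infinity>\<close> at a cavity \<open>r(0) > 0\<close>. Writing \<open>P = \<tau>\<^sup>n\<^sup>-\<^sup>1\<close> and
  \<open>v = r' P\<close>, the radial stress is \<open>T = P \<phi>'(r') + P\<^sup>2 h'(v)\<close>; by (A5) and (A8) with \<open>\<beta> = 0\<close>
  the function \<open>\<phi>'\<close> is nonnegative and bounded near \<open>0\<close>, so \<open>T \<rightarrow> 0\<close> forces \<open>h'(v) \<rightarrow> 0\<close>, and
  the strict monotonicity of \<open>h'\<close> gives \<open>v \<rightarrow> \<varpi>\<close>.\<close>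

lemma increasing_if_deriv_nonneg:
  fixes g g' :: "real \<Rightarrow> real"
  assumes "a \<le> b" "continuous_on {a..b} g"
    and "\<And>x. a < x \<Longrightarrow> x < b \<Longrightarrow> (g has_real_derivative g' x) (at x)"
    and "\<And>x. a < x \<Longrightarrow> x < b \<Longrightarrow> 0 \<le> g' x"
  shows "g a \<le> g b"
proof (rule DERIV_nonneg_imp_increasing_open[OF assms(1) _ assms(2)])
  fix x assume "a < x" "x < b"
  then show "\<exists>y. (g has_real_derivative y) (at x) \<and> 0 \<le> y" using assms(3,4) by blast
qed

lemma le_if_deriv_zero_and_second_deriv_nonneg:
  fixes f fd fdd :: "real \<Rightarrow> real"
  assumes "t \<le> z" "continuous_on {t..z} f" "continuous_on {t..z} fd" "fd t = 0"
    and f': "\<And>x. t < x \<Longrightarrow> x < z \<Longrightarrow> (f has_real_derivative fd x) (at x)"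
    and fd': "\<And>x. t < x \<Longrightarrow> x < z \<Longrightarrow> (fd has_real_derivative fdd x) (at x)"
    and fdd: "\<And>x. t < x \<Longrightarrow> x < z \<Longrightarrow> 0 \<le> fdd x"
  shows "f t \<le> f z"
proof (rule increasing_if_deriv_nonneg[where g = f and g' = fd, OF assms(1,2) f'])
  fix x assume x: "t < x" "x < z"
  have "fd t \<le> fd x"
    using x assms(3) fd' fdd
    by (intro increasing_if_deriv_nonneg[where g = fd and g' = fdd] continuous_on_subset[OF assms(3)])
      auto
  then show "0 \<le> fd x" using \<open>fd t = 0\<close> by simp
qed

lemma has_real_derivative_at_if_within_atLeast:
  assumes "(g has_real_derivative D) (at x within {a..})" "a < x"
  shows "(g has_real_derivative D) (at x)"
  using assms at_within_interior[of x "{a..}"] by (simp add: interior_Ici)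

lemma first_nonpos_point:
  fixes f :: "real \<Rightarrow> real"
  assumes cont: "continuous_on {0..b} f" and pos: "eventually (\<lambda>x. 0 < f x) (at_right 0)"
    and b: "0 < b" "f b \<le> 0"
  obtains z where "0 < z" "z \<le> b" "f z \<le> 0" "\<And>x. 0 < x \<Longrightarrow> x < z \<Longrightarrow> 0 < f x"
proof -
  obtain d where d: "0 < d" and near_0: "\<And>x. 0 < x \<Longrightarrow> x < d \<Longrightarrow> 0 < f x"
    using pos unfolding eventually_at_right_field by blast
  define a where "a = min d b / 2"
  have a: "0 < a" "a < d" "a < b" using d b by (auto simp: a_def)
  define S where "S = {a..b} \<inter> f -` {..0}"
  have "closed S" unfolding S_def
    using a by (intro continuous_closed_preimage continuous_on_subset[OF cont]) auto
  moreover have "b \<in> S" using a b by (simp add: S_def)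
  moreover have S_bdd: "bdd_below S" by (rule bdd_belowI[of _ a]) (simp add: S_def)
  ultimately have "Inf S \<in> S" using closed_contains_Inf by blast
  then have z: "a \<le> Inf S" "Inf S \<le> b" "f (Inf S) \<le> 0" by (auto simp: S_def)
  show thesis
  proof (rule that[of "Inf S"])
    fix x assume x: "0 < x" "x < Inf S"
    show "0 < f x"
    proof (rule ccontr)
      assume "\<not> 0 < f x"
      then have "d \<le> x" using near_0[of x] x(1) by linarith
      then have "x \<in> S" using \<open>\<not> 0 < f x\<close> a x z by (simp add: S_def)
      then show False using cInf_lower[OF _ S_bdd, of x] x by simp
    qed
  qed (use z a in auto)
qed

lemma strict_mono_on_tendsto_imp_tendsto:
  fixes g :: "real \<Rightarrow> real" and v :: "'a \<Rightarrow> real"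
  assumes mono: "strict_mono_on {0<..} g" and w: "0 < w"
    and pos: "eventually (\<lambda>x. 0 < v x) F" and lim: "((\<lambda>x. g (v x)) \<longlongrightarrow> g w) F"
  shows "(v \<longlongrightarrow> w) F"
proof (rule order_tendstoI)
  fix a assume "a < w"
  show "eventually (\<lambda>x. a < v x) F"
  proof (cases "0 < a")
    case True
    then have "g a < g w" using strict_mono_onD[OF mono] \<open>a < w\<close> by simp
    show ?thesis using order_tendstoD(1)[OF lim \<open>g a < g w\<close>] pos
    proof eventually_elim
      case (elim x)
      show ?case
      proof (rule ccontr)
        assume "\<not> a < v x"
        then have "g (v x) \<le> g a" using strict_mono_on_leD[OF mono] elim True by simp
        then show False using elim by simp
      qed
    qed
  qed (use pos in \<open>auto elim: eventually_mono\<close>)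
next
  fix a assume "w < a"
  then have "g w < g a" using strict_mono_onD[OF mono] w by simp
  show "eventually (\<lambda>x. v x < a) F" using order_tendstoD(2)[OF lim \<open>g w < g a\<close>] pos
  proof eventually_elim
    case (elim x)
    show ?case
    proof (rule ccontr)
      assume "\<not> v x < a"
      then have "g a \<le> g (v x)" using strict_mono_on_leD[OF mono] elim w \<open>w < a\<close> by simp
      then show False using elim by simp
    qed
  qed
qed

section \<open>Convex functions\<close>

lemma convex_on_above_tangent:
  fixes g :: "real \<Rightarrow> real"
  assumes "convex_on S g" "convex S" "open S" "x \<in> S" "y \<in> S" "g differentiable (at x)"
  shows "deriv g x * (y - x) \<le> g y - g x"
proof (rule convex_on_imp_above_tangent[OF assms(1) convex_connected[OF assms(2)] _ assms(5)])
  show "x \<in> interior S" using assms(3,4) by (simp add: interior_open)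
  show "(g has_field_derivative deriv g x) (at x within S)"
    using assms(6) DERIV_deriv_iff_real_differentiable has_field_derivative_at_within by blast
qed

lemma convex_on_deriv_mono:
  fixes g :: "real \<Rightarrow> real"
  assumes "convex_on S g" "convex S" "open S" "x \<in> S" "y \<in> S" "x \<le> y"
    and "g differentiable (at x)" "g differentiable (at y)"
  shows "deriv g x \<le> deriv g y"
proof -
  have "deriv g x * (y - x) \<le> g y - g x" "deriv g y * (x - y) \<le> g x - g y"
    using convex_on_above_tangent assms by blast+
  then have "deriv g x * (y - x) \<le> deriv g y * (y - x)" by (simp add: algebra_simps)
  then show ?thesis using assms(6) by (cases "x = y") auto
qed

lemma strictly_convex_onD:
  assumes "strictly_convex_on S g" "x \<in> S" "y \<in> S" "x \<noteq> y" "0 < u" "u < 1"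
  shows "g (u * x + (1 - u) * y) < u * g x + (1 - u) * g y"
  using assms unfolding strictly_convex_on_def by blast

lemma strictly_convex_on_imp_convex_on:
  fixes g :: "real \<Rightarrow> real"
  assumes "strictly_convex_on S g" "convex S"
  shows "convex_on S g"
proof (rule convex_onI)
  fix t x y :: real assume t: "0 < t" "t < 1" and xy: "x \<in> S" "y \<in> S"
  show "g ((1 - t) *\<^sub>R x + t *\<^sub>R y) \<le> (1 - t) * g x + t * g y"
  proof (cases "x = y")
    case False
    then have "g ((1 - t) * x + (1 - (1 - t)) * y) < (1 - t) * g x + (1 - (1 - t)) * g y"
      using t xy by (intro strictly_convex_onD[OF assms(1)]) auto
    then show ?thesis by simp
  qed (simp add: algebra_simps)
qed (fact assms(2))

lemma strictly_convex_on_deriv_strict_mono: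
  fixes g :: "real \<Rightarrow> real"
  assumes sc: "strictly_convex_on S g" and S: "convex S" "open S"
    and diff: "\<And>x. x \<in> S \<Longrightarrow> g differentiable (at x)"
  shows "strict_mono_on S (deriv g)"
proof (rule strict_mono_onI)
  fix x y assume xy: "x \<in> S" "y \<in> S" "x < y"
  define m where "m = (x + y) / 2"
  have "(1/2) *\<^sub>R x + (1/2) *\<^sub>R y \<in> S" using S(1) xy by (intro convexD) auto
  then have m: "m \<in> S" by (simp add: m_def add_divide_distrib)
  have "g ((1/2) * x + (1 - 1/2) * y) < (1/2) * g x + (1 - 1/2) * g y"
    using xy by (intro strictly_convex_onD[OF sc]) auto
  then have "g m < (g x + g y) / 2" by (simp add: m_def add_divide_distrib)
  moreover have "deriv g x * (m - x) \<le> g m - g x" "deriv g y * (m - y) \<le> g m - g y"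
    using convex_on_above_tangent[OF strictly_convex_on_imp_convex_on[OF sc S(1)] S] xy m diff
    by blast+
  ultimately have "deriv g x * (y - x) < deriv g y * (y - x)"
    by (simp add: m_def field_simps)
  then show "deriv g x < deriv g y" using xy by simp
qed

lemma continuous_on_deriv_if_C2_on:
  assumes "C2_on S g" "open S"
  shows "continuous_on S (deriv g)"
  using assms unfolding C2_on_def
  by (auto simp: continuous_on_eq_continuous_at intro: differentiable_imp_continuous_within)

lemma convex_on_deriv_has_zero_if_coercive:
  fixes h :: "real \<Rightarrow> real"
  assumes conv: "convex_on {0<..} h"
    and diff: "\<And>x. x > 0 \<Longrightarrow> h differentiable (at x)"
    and cont: "continuous_on {0<..} (deriv h)"
    and at_0: "filterlim h at_top (at_right 0)"
    and at_infinity: "filterlim (\<lambda>v. h v / v) at_top at_top"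
  shows "\<exists>w>0. deriv h w = 0"
proof -
  note tangent = convex_on_above_tangent[OF conv convex_real_interval(3) open_greaterThan]
  have "eventually (\<lambda>x. h 1 + 1 \<le> h x) (at_right 0)"
    using at_0 unfolding filterlim_at_top by blast
  then have "eventually (\<lambda>x. h 1 + 1 \<le> h x \<and> x \<in> {0<..<1}) (at_right 0)"
    using eventually_at_right_real[of 0 1] by (intro eventually_conj) auto
  then obtain x where x: "h 1 + 1 \<le> h x" "0 < x" "x < 1"
    using eventually_happens'[OF trivial_limit_at_right_real] by auto
  have "deriv h x * (1 - x) \<le> h 1 - h x" using tangent[of x 1] x diff by simp
  then have "deriv h x * (1 - x) < 0" using x by linarith
  then have neg: "deriv h x < 0" using x by (simp add: mult_less_0_iff)
  have "eventually (\<lambda>y. \<bar>h 1\<bar> + 1 \<le> h y / y) at_top"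
    using at_infinity unfolding filterlim_at_top by blast
  then have "eventually (\<lambda>y. \<bar>h 1\<bar> + 1 \<le> h y / y \<and> 1 < y) at_top"
    using eventually_gt_at_top[of 1] by (intro eventually_conj)
  then obtain y where y: "\<bar>h 1\<bar> + 1 \<le> h y / y" "1 < y"
    using eventually_happens'[OF trivial_limit_at_top_linorder] by auto
  have "0 < \<bar>h 1\<bar> + 1" using abs_ge_zero[of "h 1"] by linarith
  then have "\<bar>h 1\<bar> + 1 < (\<bar>h 1\<bar> + 1) * y" using mult_strict_left_mono[OF y(2)] by simp
  also have "\<dots> \<le> h y" using y by (simp add: pos_le_divide_eq)
  finally have "h 1 < h y" using abs_ge_self[of "h 1"] by linarith
  moreover have "deriv h y * (1 - y) \<le> h 1 - h y" using tangent[of y 1] y diff by simp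
  ultimately have "0 < deriv h y * (y - 1)" by (simp add: algebra_simps)
  then have pos: "0 < deriv h y" using y by (simp add: zero_less_mult_iff)
  have "continuous_on {x..y} (deriv h)" using x by (intro continuous_on_subset[OF cont]) auto
  then obtain w where "x \<le> w" "w \<le> y" "deriv h w = 0"
    using IVT'[of "deriv h" x 0 y] neg pos \<open>x < 1\<close> \<open>1 < y\<close> by fastforce
  then show ?thesis using x(2) by (intro exI[of _ w]) auto
qed

lemma bdd_at_0_if_powr_growth:
  fixes g :: "real \<Rightarrow> real"
  assumes growth: "\<forall>v>0. g v \<le> \<delta> * (1 + v powr \<alpha> + v powr \<beta>)"
    and "0 \<le> \<delta>" "0 \<le> \<alpha>" "0 \<le> \<beta>" and v: "0 < v" "v \<le> 1"
  shows "g v \<le> 3 * \<delta>"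
proof -
  have "g v \<le> \<delta> * (1 + v powr \<alpha> + v powr \<beta>)" using growth v by simp
  also have "\<dots> \<le> \<delta> * 3"
    using powr_le1[of \<alpha> v] powr_le1[of \<beta> v] assms by (intro mult_left_mono) auto
  finally show ?thesis by simp
qed

text \<open>If \<open>x\<^sub>0 \<phi>'(x\<^sub>0) = -c < 0\<close>, then \<open>\<phi>' \<le> -c/x\<close> on \<open>(0, x\<^sub>0]\<close>, so each halving
  of the argument raises \<open>\<phi>\<close> by at least \<open>c/2\<close>, contradicting boundedness near \<open>0\<close>.\<close>
lemma convex_on_deriv_nonneg_if_bdd_at_0:
  fixes \<phi> :: "real \<Rightarrow> real"
  assumes conv: "convex_on {0<..} \<phi>"
    and diff: "\<And>v. v > 0 \<Longrightarrow> \<phi> differentiable (at v)"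
    and mono: "mono_on {0<..} (\<lambda>v. v * deriv \<phi> v)"
    and bdd: "\<And>v. 0 < v \<Longrightarrow> v \<le> 1 \<Longrightarrow> \<phi> v \<le> M"
    and x0: "0 < x0"
  shows "0 \<le> deriv \<phi> x0"
proof (rule ccontr)
  assume "\<not> 0 \<le> deriv \<phi> x0"
  define c where "c = - (x0 * deriv \<phi> x0)"
  have c: "0 < c" using \<open>\<not> 0 \<le> deriv \<phi> x0\<close> x0 by (simp add: c_def mult_pos_neg)
  have halving: "\<phi> x + c / 2 \<le> \<phi> (x / 2)" if "0 < x" "x \<le> x0" for x
  proof -
    have "x * deriv \<phi> x \<le> - c" using mono_onD[OF mono] that x0 by (simp add: c_def)
    moreover have "deriv \<phi> x * (x / 2 - x) \<le> \<phi> (x / 2) - \<phi> x"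
      using convex_on_above_tangent[OF conv convex_real_interval(3) open_greaterThan, of x "x / 2"]
        that diff by simp
    moreover have "deriv \<phi> x * (x / 2 - x) = - (x * deriv \<phi> x) / 2" by (simp add: field_simps)
    ultimately show ?thesis by linarith
  qed
  have iterate: "\<phi> x0 + real k * c / 2 \<le> \<phi> (x0 / 2 ^ k)" for k :: nat
  proof (induction k)
    case (Suc k)
    have "\<phi> (x0 / 2 ^ k) + c / 2 \<le> \<phi> (x0 / 2 ^ k / 2)"
      by (rule halving) (use x0 in \<open>auto simp: divide_le_eq\<close>)
    then show ?case using Suc.IH by (simp add: ring_distribs add_divide_distrib mult.commute)
  qed simp
  obtain k :: nat where k: "2 * (M - \<phi> x0) / c < real k" "x0 < real k"
    using reals_Archimedean2[of "max (2 * (M - \<phi> x0) / c) x0"] by auto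
  have "real k < 2 ^ k" using less_exp[of k] by (metis of_nat_less_numeral_power_cancel_iff)
  then have "x0 < 2 ^ k" using k(2) by linarith
  then have "\<phi> (x0 / 2 ^ k) \<le> M" using x0 by (intro bdd) auto
  moreover have "M - \<phi> x0 < real k * c / 2" using k(1) c by (simp add: field_simps)
  ultimately show False using iterate[of k] by linarith
qed

section \<open>Positivity of f\<close>

lemma mu_plus_has_real_derivative:
  assumes \<kappa>: "continuous_on {0..} \<kappa>" and x: "0 < x"
  shows "(mu_plus \<kappa> has_real_derivative x * max (\<kappa> x) 0) (at x)"
proof -
  have "continuous_on {0..x + 1} (\<lambda>s. s * max (\<kappa> s) 0)"
    by (intro continuous_intros continuous_on_subset[OF \<kappa>]) auto
  from integral_has_vector_derivative[OF this, of x] x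
  have "(mu_plus \<kappa> has_real_derivative x * max (\<kappa> x) 0) (at x within {0..x + 1})"
    by (simp add: mu_plus_def[abs_def] has_real_derivative_iff_has_vector_derivative)
  then show ?thesis using x at_within_interior[of x "{0..x + 1}"] by simp
qed

lemma continuous_on_mu_plus:
  assumes \<kappa>: "continuous_on {0..} \<kappa>"
  shows "continuous_on {0..b} (mu_plus \<kappa>)"
  unfolding mu_plus_def[abs_def]
  by (intro indefinite_integral_continuous_1 integrable_continuous_real continuous_intros
      continuous_on_subset[OF \<kappa>]) auto

lemma mu_plus_mono:
  assumes \<kappa>: "continuous_on {0..} \<kappa>" and "0 \<le> x" "x \<le> y"
  shows "mu_plus \<kappa> x \<le> mu_plus \<kappa> y"
proof (rule increasing_if_deriv_nonneg[where g = "mu_plus \<kappa>" and g' = "\<lambda>s. s * max (\<kappa> s) 0"])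
  show "continuous_on {x..y} (mu_plus \<kappa>)"
    using assms(2) by (intro continuous_on_subset[OF continuous_on_mu_plus[OF \<kappa>, of y]]) auto
  fix s assume "x < s" "s < y"
  then have "0 < s" using assms(2) by simp
  then show "(mu_plus \<kappa> has_real_derivative s * max (\<kappa> s) 0) (at s)"
    by (rule mu_plus_has_real_derivative[OF \<kappa>])
  show "0 \<le> s * max (\<kappa> s) 0" using \<open>0 < s\<close> by simp
qed (fact assms(3))

lemma kappa_nonpos_if_mu_plus_flat:
  assumes \<kappa>: "continuous_on {0..} \<kappa>" and x: "0 \<le> t" "t < x" "x < z"
    and flat: "mu_plus \<kappa> z \<le> mu_plus \<kappa> t"
  shows "\<kappa> x \<le> 0"
proof -
  have const: "mu_plus \<kappa> y = mu_plus \<kappa> t" if "t \<le> y" "y \<le> z" for y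
    using mu_plus_mono[OF \<kappa>, of t y] mu_plus_mono[OF \<kappa>, of y z] that x flat by simp
  have "x * max (\<kappa> x) 0 = 0"
  proof (rule DERIV_local_const[OF mu_plus_has_real_derivative[OF \<kappa>]])
    show "0 < x" "0 < min (x - t) (z - x)" using x by auto
    show "\<forall>y. \<bar>x - y\<bar> < min (x - t) (z - x) \<longrightarrow> mu_plus \<kappa> x = mu_plus \<kappa> y"
    proof (intro allI impI)
      fix y assume "\<bar>x - y\<bar> < min (x - t) (z - x)"
      then have "t \<le> y" "y \<le> z" by (auto simp: abs_if split: if_splits)
      then show "mu_plus \<kappa> x = mu_plus \<kappa> y" using const[of x] const[of y] x by simp
    qed
  qed
  then show ?thesis using x by simp
qed

text \<open>The energy \<open>E(x) = f(t) \<mu>\<^sub>+(x) + x f'(x) - f(x)\<close> has \<open>E' = x (f(t) \<kappa>\<^sub>+ - \<kappa> f) \<ge> 0\<close>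
  while \<open>0 < f \<le> f(t)\<close>; compare \<open>E(0) = 0\<close> with \<open>E(t) = f(t) (\<mu>\<^sub>+(t) - 1)\<close>.\<close>
lemma one_le_mu_plus_at_max:
  fixes \<kappa> f fd :: "real \<Rightarrow> real"
  assumes \<kappa>: "continuous_on {0..} \<kappa>"
    and f': "\<And>x. 0 \<le> x \<Longrightarrow> (f has_real_derivative fd x) (at x within {0..})"
    and fd': "\<And>x. 0 \<le> x \<Longrightarrow> (fd has_real_derivative - \<kappa> x * f x) (at x within {0..})"
    and f0: "f 0 = 0" and t: "0 < t" "fd t = 0"
    and below: "\<And>x. 0 < x \<Longrightarrow> x < t \<Longrightarrow> 0 < f x \<and> f x \<le> f t"
  shows "1 \<le> mu_plus \<kappa> t"
proof -
  have ft: "0 < f t" using below[of "t / 2"] t by auto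
  define E where "E x = f t * mu_plus \<kappa> x + x * fd x - f x" for x
  have "E 0 \<le> E t"
  proof (rule increasing_if_deriv_nonneg[where g = E and
        g' = "\<lambda>x. f t * (x * max (\<kappa> x) 0) + (1 * fd x + (- \<kappa> x * f x) * x) - fd x"])
    show "continuous_on {0..t} E" unfolding E_def
      by (intro continuous_intros continuous_on_mu_plus[OF \<kappa>]
          continuous_on_subset[OF DERIV_continuous_on[OF f']]
          continuous_on_subset[OF DERIV_continuous_on[OF fd']]) auto
    fix x assume x: "0 < x" "x < t"
    show "(E has_real_derivative
        f t * (x * max (\<kappa> x) 0) + (1 * fd x + (- \<kappa> x * f x) * x) - fd x) (at x)"
      unfolding E_def using x
      by (intro DERIV_diff DERIV_add DERIV_cmult DERIV_mult DERIV_ident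
          mu_plus_has_real_derivative[OF \<kappa>] has_real_derivative_at_if_within_atLeast[OF f']
          has_real_derivative_at_if_within_atLeast[OF fd']) auto
    have "\<kappa> x * f x \<le> max (\<kappa> x) 0 * f t"
      using below[OF x] by (intro order.trans[OF mult_right_mono mult_left_mono]) auto
    then show "0 \<le> f t * (x * max (\<kappa> x) 0) + (1 * fd x + (- \<kappa> x * f x) * x) - fd x"
      using x by (simp add: algebra_simps mult_left_mono)
  qed (use t in simp)
  then show ?thesis using ft t f0 by (simp add: E_def mu_plus_def)
qed

text \<open>Sturm comparison: a first zero \<open>z \<le> L\<close> of \<open>f\<close> would force \<open>\<mu>\<^sub>+\<close> to reach \<open>1\<close> at the
  maximum \<open>t\<close> of \<open>f\<close> on \<open>[0, z]\<close>, hence \<open>\<kappa> \<le> 0\<close> on \<open>(t, z)\<close>, where \<open>f\<close> is then convex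
  with \<open>f'(t) = 0\<close>, so \<open>f(z) \<ge> f(t) > 0\<close>.\<close>
lemma pos_if_mu_plus_le_1:
  fixes \<kappa> f fd :: "real \<Rightarrow> real"
  assumes \<kappa>: "continuous_on {0..} \<kappa>"
    and f': "\<And>x. 0 \<le> x \<Longrightarrow> (f has_real_derivative fd x) (at x within {0..})"
    and fd': "\<And>x. 0 \<le> x \<Longrightarrow> (fd has_real_derivative - \<kappa> x * f x) (at x within {0..})"
    and f0: "f 0 = 0" and fd0: "fd 0 = 1"
    and mu: "mu_plus \<kappa> L \<le> 1" and x: "0 < x" "x \<le> L"
  shows "0 < f x"
proof (rule ccontr)
  assume "\<not> 0 < f x"
  have f_cont: "continuous_on {0..} f" and fd_cont: "continuous_on {0..} fd"
    using DERIV_continuous_on[OF f'] DERIV_continuous_on[OF fd'] by auto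
  have "\<exists>d>0. \<forall>h>0. 0 + h \<in> {0..} \<longrightarrow> h < d \<longrightarrow> f 0 < f (0 + h)"
    using fd0 by (intro has_real_derivative_pos_inc_right[OF f'[of 0]]) auto
  then have "eventually (\<lambda>x. 0 < f x) (at_right 0)"
    unfolding eventually_at_right_field using f0 by auto
  moreover have "continuous_on {0..x} f" by (rule continuous_on_subset[OF f_cont]) auto
  ultimately obtain z where z: "0 < z" "z \<le> x" "f z \<le> 0"
    and pos: "\<And>y. 0 < y \<Longrightarrow> y < z \<Longrightarrow> 0 < f y"
    using x(1) \<open>\<not> 0 < f x\<close> first_nonpos_point[of x f] by auto
  have "continuous_on {0..z} f" by (rule continuous_on_subset[OF f_cont]) auto
  then obtain t where t: "t \<in> {0..z}" and max: "\<And>y. y \<in> {0..z} \<Longrightarrow> f y \<le> f t"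
    using continuous_attains_sup[of "{0..z}" f] z by auto
  have ft: "0 < f t" using max[of "z / 2"] pos[of "z / 2"] z by simp
  then have "t \<noteq> 0" "t \<noteq> z" using f0 z(3) by auto
  then have t: "0 < t" "t < z" using t by auto
  have "fd t = 0"
  proof (rule DERIV_local_max[OF has_real_derivative_at_if_within_atLeast[OF f']])
    show "0 < min t (z - t)" using t by simp
    show "\<forall>y. \<bar>t - y\<bar> < min t (z - t) \<longrightarrow> f y \<le> f t"
      using max by (auto simp: abs_if split: if_splits)
  qed (use t in auto)
  then have "1 \<le> mu_plus \<kappa> t"
    using pos max t by (intro one_le_mu_plus_at_max[OF \<kappa> f' fd' f0]) auto
  moreover have "mu_plus \<kappa> z \<le> 1" using mu_plus_mono[OF \<kappa>, of z L] z x mu by simp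
  ultimately have \<kappa>_nonpos: "\<kappa> y \<le> 0" if "t < y" "y < z" for y
    using kappa_nonpos_if_mu_plus_flat[OF \<kappa>, of t y z] that t by simp
  have "f t \<le> f z"
  proof (rule le_if_deriv_zero_and_second_deriv_nonneg
      [where f = f and fd = fd and fdd = "\<lambda>y. - \<kappa> y * f y"])
    show "continuous_on {t..z} f" "continuous_on {t..z} fd"
      using t by (auto intro: continuous_on_subset[OF f_cont] continuous_on_subset[OF fd_cont])
    fix y assume y: "t < y" "y < z"
    show "(f has_real_derivative fd y) (at y)"
      using y t by (intro has_real_derivative_at_if_within_atLeast[OF f']) auto
    show "(fd has_real_derivative - \<kappa> y * f y) (at y)"
      using y t by (intro has_real_derivative_at_if_within_atLeast[OF fd']) auto
    have "\<kappa> y \<le> 0" "0 < f y" using \<kappa>_nonpos[of y] pos[of y] y t by auto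
    then show "0 \<le> - \<kappa> y * f y" by (simp add: mult_nonpos_nonneg)
  qed (use t \<open>fd t = 0\<close> in auto)
  then show False using ft z by simp
qed

section \<open>The limit at the cavity\<close>

lemma tau_tendsto_at_top:
  fixes f fd r :: "real \<Rightarrow> real"
  assumes f': "\<And>x. 0 \<le> x \<Longrightarrow> (f has_real_derivative fd x) (at x within {0..})" and f0: "f 0 = 0"
    and f_pos: "\<And>x. 0 < x \<Longrightarrow> x \<le> L \<Longrightarrow> 0 < f x"
    and r: "(r \<longlongrightarrow> r0) (at_right 0)" "0 < r0" "r0 \<le> L"
  shows "filterlim (tau f r) at_top (at_right 0)"
proof -
  have "isCont f r0"
    using DERIV_isCont[OF has_real_derivative_at_if_within_atLeast[OF f']] r(2) by simp
  then have num: "((\<lambda>\<rho>. f (r \<rho>)) \<longlongrightarrow> f r0) (at_right 0)" using r(1) by (rule isCont_tendsto_compose)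
  have "(f \<longlongrightarrow> 0) (at 0 within {0..})"
    using DERIV_continuous[OF f'[of 0]] f0 by (simp add: continuous_within)
  then have den: "(f \<longlongrightarrow> 0) (at_right 0)" by (rule tendsto_within_subset) auto
  have "0 < min L 1" using r by simp
  then have den_pos: "eventually (\<lambda>\<rho>. 0 < f \<rho>) (at_right 0)"
    by (rule eventually_mono[OF eventually_at_right_real]) (simp add: f_pos)
  show ?thesis
    unfolding tau_def[abs_def] by (rule LIM_at_top_divide[OF num f_pos[OF r(2,3)] den den_pos])
qed

lemma tendsto_at_right_0_le_if_deriv_nonneg:
  fixes r rd :: "real \<Rightarrow> real"
  assumes r': "\<And>\<rho>. \<rho> \<in> {0<..1} \<Longrightarrow> (r has_real_derivative rd \<rho>) (at \<rho> within {0<..1})"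
    and rd: "\<And>\<rho>. \<rho> \<in> {0<..1} \<Longrightarrow> 0 \<le> rd \<rho>" and lim: "(r \<longlongrightarrow> r0) (at_right 0)"
  shows "r0 \<le> r 1"
proof (rule tendsto_upperbound[OF lim])
  show "eventually (\<lambda>\<rho>. r \<rho> \<le> r 1) (at_right 0)"
    using eventually_at_right_real[OF zero_less_one]
  proof eventually_elim
    case (elim \<rho>)
    show ?case
    proof (rule increasing_if_deriv_nonneg[where g = r and g' = rd])
      show "continuous_on {\<rho>..1} r"
        using elim by (intro continuous_on_subset[OF DERIV_continuous_on[OF r']]) auto
      fix s assume s: "\<rho> < s" "s < 1"
      have "(r has_real_derivative rd s) (at s within {0<..<1})"
        using s elim by (intro has_field_derivative_subset[OF r']) auto
      then show "(r has_real_derivative rd s) (at s)"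
        using s elim at_within_open[of s "{0<..<1}"] by simp
      show "0 \<le> rd s" using rd s elim by simp
    qed (use elim in simp)
  qed
qed simp

text \<open>Since \<open>\<phi>' \<ge> 0\<close>, the vanishing stress first bounds \<open>v = r' P\<close>, hence \<open>r' = v/P \<rightarrow> 0\<close>;
  then \<open>\<phi>'(r')/P \<rightarrow> 0\<close> and \<open>h'(v) = T/P\<^sup>2 - \<phi>'(r')/P \<rightarrow> 0\<close>.\<close>
lemma jacobian_tendsto_zero_of_deriv:
  fixes \<phi> h :: "real \<Rightarrow> real" and P rd :: "'a \<Rightarrow> real"
  assumes h_mono: "strict_mono_on {0<..} (deriv h)" and w: "0 < w" "deriv h w = 0"
    and \<phi>_nonneg: "\<And>v. 0 < v \<Longrightarrow> 0 \<le> deriv \<phi> v"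
    and \<phi>_bdd: "\<And>v. 0 < v \<Longrightarrow> v \<le> 1 \<Longrightarrow> deriv \<phi> v \<le> K"
    and P: "filterlim P at_top F" and rd: "eventually (\<lambda>x. 0 < rd x) F"
    and stress: "((\<lambda>x. P x * (deriv \<phi> (rd x) + deriv h (rd x * P x) * P x)) \<longlongrightarrow> 0) F"
  shows "((\<lambda>x. rd x * P x) \<longlongrightarrow> w) F"
proof -
  define v where "v x = rd x * P x" for x
  define T where "T x = P x * (deriv \<phi> (rd x) + deriv h (v x) * P x)" for x
  have P_pos: "eventually (\<lambda>x. 0 < P x) F"
    using P by (rule eventually_compose_filterlim[OF eventually_gt_at_top])
  have P_inf: "filterlim P at_infinity F" using P by (rule filterlim_at_top_imp_at_infinity)
  have "filterlim (\<lambda>x. P x * P x) at_infinity F"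
    by (rule filterlim_at_top_imp_at_infinity[OF filterlim_at_top_mult_at_top[OF P P]])
  then have T_scaled: "((\<lambda>x. T x / (P x * P x)) \<longlongrightarrow> 0) F"
    using stress unfolding T_def v_def by (intro tendsto_divide_0) auto
  have split: "T x / (P x * P x) = deriv \<phi> (rd x) / P x + deriv h (v x)" if "0 < P x" for x
    using that by (simp add: T_def field_simps)
  have v_pos: "eventually (\<lambda>x. 0 < v x) F"
    using rd P_pos by eventually_elim (simp add: v_def)
  have "deriv h w < deriv h (w + 1)" using strict_mono_onD[OF h_mono, of w "w + 1"] w by simp
  then have "eventually (\<lambda>x. T x / (P x * P x) < deriv h (w + 1)) F"
    using w(2) by (intro order_tendstoD(2)[OF T_scaled]) simp
  then have v_bdd: "eventually (\<lambda>x. v x < w + 1) F"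
    using rd P_pos v_pos
  proof eventually_elim
    case (elim x)
    have "0 \<le> deriv \<phi> (rd x) / P x" using \<phi>_nonneg elim by simp
    then have "deriv h (v x) < deriv h (w + 1)" using elim split by simp
    then show ?case
      using strict_mono_on_leD[OF h_mono, of "w + 1" "v x"] elim w by force
  qed
  have inverse_P: "((\<lambda>x. c / P x) \<longlongrightarrow> 0) F" for c
    by (rule tendsto_divide_0[OF tendsto_const P_inf])
  then have small: "eventually (\<lambda>x. (w + 1) / P x < 1) F"
    by (rule order_tendstoD(2)) simp
  have upper: "eventually (\<lambda>x. deriv \<phi> (rd x) / P x \<le> K / P x) F"
    using rd P_pos v_bdd small
  proof eventually_elim
    case (elim x)
    have "rd x \<le> (w + 1) / P x" using elim by (simp add: v_def field_simps)
    then have "deriv \<phi> (rd x) \<le> K" using \<phi>_bdd elim(1,4) by simp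
    then show ?case using elim by (simp add: divide_right_mono)
  qed
  have lower: "eventually (\<lambda>x. 0 \<le> deriv \<phi> (rd x) / P x) F"
    using rd P_pos by eventually_elim (simp add: \<phi>_nonneg)
  have \<phi>_term: "((\<lambda>x. deriv \<phi> (rd x) / P x) \<longlongrightarrow> 0) F"
    by (rule tendsto_sandwich[OF lower upper tendsto_const inverse_P])
  have "((\<lambda>x. T x / (P x * P x) - deriv \<phi> (rd x) / P x) \<longlongrightarrow> deriv h w) F"
    using tendsto_diff[OF T_scaled \<phi>_term] w(2) by simp
  moreover have "eventually (\<lambda>x. T x / (P x * P x) - deriv \<phi> (rd x) / P x = deriv h (v x)) F"
    using P_pos by eventually_elim (simp add: split)
  ultimately have "((\<lambda>x. deriv h (v x)) \<longlongrightarrow> deriv h w) F"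
    by (rule Lim_transform_eventually)
  then show ?thesis
    using strict_mono_on_tendsto_imp_tendsto[OF h_mono w(1) v_pos] by (simp add: v_def)
qed

theorem proposition4p3:
  fixes n :: nat and \<kappa> f fd \<phi> h r rd rdd :: "real \<Rightarrow> real" and lam :: real
  assumes n2: "n \<ge> 2"
    and \<kappa>_cont: "continuous_on {0..} \<kappa>"
    and f_deriv: "\<And>x. x \<ge> 0 \<Longrightarrow> (f has_real_derivative fd x) (at x within {0..})"
    and fd_deriv: "\<And>x. x \<ge> 0 \<Longrightarrow> (fd has_real_derivative (- \<kappa> x * f x)) (at x within {0..})"
    and f0: "f 0 = 0" and fd0: "fd 0 = 1"
    and lam_pos: "lam > 0"
    and mu: "mu_plus \<kappa> (max lam 1) \<le> 1"
    and A1_C2: "C2_on {0<..} h"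
    and A1_conv: "strictly_convex_on {0<..} h"
    and A2_0: "filterlim h at_top (at_right 0)"
    and A2_inf: "filterlim (\<lambda>v. h v / v) at_top at_top"
    and A4_pos: "\<And>v. v > 0 \<Longrightarrow> \<phi> v > 0"
    and A4_C2: "C2_on {0<..} \<phi>"
    and A4_conv: "convex_on {0<..} \<phi>"
    and A5: "strict_mono_on {0<..} (\<lambda>v. v * deriv \<phi> v)"
    and A6: "\<exists>t0 \<ge> 0.
       ((t0 > 0 \<and> deriv \<phi> t0 = 0) \<or> (t0 = 0 \<and> (deriv \<phi> \<longlongrightarrow> 0) (at_right 0))) \<and>
       (\<forall>s \<ge> 1. bdd_above {deriv \<phi> v / deriv \<phi> (s * v) | v. v > t0}) \<and>
       (\<forall>s. 0 < s \<and> s \<le> 1 \<longrightarrow> bdd_below {deriv \<phi> v / deriv \<phi> (s * v) | v. v > t0 / s}) \<and>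
       (let q1 = (\<lambda>s. Sup {deriv \<phi> v / deriv \<phi> (s * v) | v. v > t0});
            q0 = (\<lambda>s. Inf {deriv \<phi> v / deriv \<phi> (s * v) | v. v > t0 / s}) in
        (\<exists>q1'. continuous_on {1..} q1' \<and>
           (\<forall>s \<ge> 1. (q1 has_real_derivative q1' s) (at s within {1..}) \<and> q1' s < 0)) \<and>
        (\<exists>q0'. continuous_on {0<..1} q0' \<and>
           (\<forall>s. 0 < s \<and> s \<le> 1 \<longrightarrow> (q0 has_real_derivative q0' s) (at s within {0<..1}) \<and> q0' s < 0)) \<and>
        (q1 \<longlongrightarrow> 0) at_top \<and> filterlim q0 at_top (at_right 0))"
    and A7: "\<exists>\<delta>0>0. \<exists>\<delta>1>0. \<forall>s v. v > 0 \<and> \<bar>s - 1\<bar> < \<delta>0 \<longrightarrow>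
               \<bar>deriv \<phi> (s * v)\<bar> \<le> \<delta>1 * \<phi> v / v"
    and A8: "\<exists>\<delta>2>0. \<exists>\<alpha>. 0 < \<alpha> \<and> \<alpha> < real n \<and>
               (\<forall>v>0. \<phi> v \<le> \<delta>2 * (1 + v powr \<alpha> + v powr 0))"
    and r_C1: "\<And>\<rho>. \<rho> \<in> {0<..1} \<Longrightarrow> (r has_real_derivative rd \<rho>) (at \<rho> within {0<..1})"
    and rd_cont: "continuous_on {0<..1} rd"
    and rd_deriv: "\<And>\<rho>. \<rho> \<in> {0<..<1} \<Longrightarrow> (rd has_real_derivative rdd \<rho>) (at \<rho>)"
    and rd_pos: "\<And>\<rho>. \<rho> \<in> {0<..1} \<Longrightarrow> rd \<rho> > 0"
    and r0_lim: "\<exists>r0 \<ge> 0. (r \<longlongrightarrow> r0) (at_right 0)"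
    and r1: "r 1 = lam"
    and ode: "\<And>\<rho>. \<rho> \<in> {0<..<1} \<Longrightarrow>
       f \<rho> * (deriv (deriv \<phi>) (rd \<rho>)
          + deriv (deriv h) (rd \<rho> * tau f r \<rho> ^ (n - 1)) * tau f r \<rho> ^ (2 * (n - 1))) * rdd \<rho>
       = real (n - 1) * (fd (r \<rho>) * deriv \<phi> (tau f r \<rho>) - fd \<rho> * deriv \<phi> (rd \<rho>))
         - real (n - 1) * (fd (r \<rho>) * rd \<rho> - fd \<rho> * tau f r \<rho>)
             * deriv (deriv h) (rd \<rho> * tau f r \<rho> ^ (n - 1)) * rd \<rho> * tau f r \<rho> ^ (2 * n - 3)"
    and cav_r0: "\<exists>r0 > 0. (r \<longlongrightarrow> r0) (at_right 0)"
    and cav_T: "(cauchy_T n \<phi> h f r rd \<longlongrightarrow> 0) (at_right 0)"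
  shows "(\<exists>w > 0. deriv h w = 0) \<and>
         (\<forall>w. w > 0 \<and> deriv h w = 0 \<longrightarrow>
            ((\<lambda>\<rho>. rd \<rho> * tau f r \<rho> ^ (n - 1)) \<longlongrightarrow> w) (at_right 0))"
proof -
  obtain r0 where r0: "0 < r0" "(r \<longlongrightarrow> r0) (at_right 0)" using cav_r0 by blast
  have "r0 \<le> lam"
    using tendsto_at_right_0_le_if_deriv_nonneg[OF r_C1 _ r0(2)] rd_pos r1 by (simp add: less_imp_le)
  moreover have f_pos: "0 < f x" if "0 < x" "x \<le> max lam 1" for x
    by (rule pos_if_mu_plus_le_1[OF \<kappa>_cont f_deriv fd_deriv f0 fd0 mu that])
  ultimately have \<tau>: "filterlim (tau f r) at_top (at_right 0)"
    using r0 by (intro tau_tendsto_at_top[OF f_deriv f0 f_pos]) auto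
  have h_diff: "h differentiable (at x)" "deriv h differentiable (at x)" if "0 < x" for x
    using A1_C2 that by (auto simp: C2_on_def)
  have h_mono: "strict_mono_on {0<..} (deriv h)"
    using A1_conv h_diff by (intro strictly_convex_on_deriv_strict_mono) auto
  have zero: "\<exists>w>0. deriv h w = 0"
    using strictly_convex_on_imp_convex_on[OF A1_conv] h_diff continuous_on_deriv_if_C2_on[OF A1_C2]
      A2_0 A2_inf by (intro convex_on_deriv_has_zero_if_coercive) auto
  have \<phi>_diff: "\<phi> differentiable (at x)" if "0 < x" for x using A4_C2 that by (simp add: C2_on_def)
  obtain M where "\<And>v. 0 < v \<Longrightarrow> v \<le> 1 \<Longrightarrow> \<phi> v \<le> M"
    using A8 bdd_at_0_if_powr_growth[where \<beta> = 0] by (metis less_imp_le order.refl)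
  then have \<phi>_nonneg: "0 \<le> deriv \<phi> v" if "0 < v" for v
    using A4_conv \<phi>_diff strict_mono_on_imp_mono_on[OF A5] that
    by (intro convex_on_deriv_nonneg_if_bdd_at_0) auto
  have \<phi>_bdd: "deriv \<phi> v \<le> deriv \<phi> 1" if "0 < v" "v \<le> 1" for v
    using A4_conv \<phi>_diff that by (intro convex_on_deriv_mono[of "{0<..}"]) auto
  have "((\<lambda>\<rho>. rd \<rho> * tau f r \<rho> ^ (n - 1)) \<longlongrightarrow> w) (at_right 0)" if "0 < w" "deriv h w = 0" for w
  proof (rule jacobian_tendsto_zero_of_deriv[OF h_mono that \<phi>_nonneg \<phi>_bdd])
    show "filterlim (\<lambda>\<rho>. tau f r \<rho> ^ (n - 1)) at_top (at_right 0)"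
      using n2 by (intro filterlim_pow_at_top[OF _ \<tau>]) auto
    show "eventually (\<lambda>\<rho>. 0 < rd \<rho>) (at_right 0)"
      using eventually_at_right_real[OF zero_less_one] by (rule eventually_mono) (simp add: rd_pos)
  qed (use cav_T in \<open>simp_all add: cauchy_T_def[abs_def]\<close>)
  then show ?thesis using zero by blast
qed

end
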